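(* For all integers $k,l\ge1$, $sat^*([k]\times[l],\{\vee_2,\wedge_2\})=\max\{k,l\}$.
   Context: $[k]\times[l]$ is ordered coordinatewise. $\vee_2$ is the poset on three elements $a,b_1,b_2$ whose only relations are $a<b_1,a<b_2$; $\wedge_2$ is the poset on three elements $a,b_1,b_2$ whose only relations are $b_1<a,b_2<a$. For posets $P,R$, $P$ is a strong subposet of $R$ if there is an injection $i:P\to R$ with $p\le_P p'\iff i(p)\le_R i(p')$. A subset $F\subseteq Q$ is strong $\{\vee_2,\wedge_2\}$-saturated if neither $\vee_2$ nor $\wedge_2$ is a strong subposet of $F$, but for every $x\in Q\setminus F$, at least one of $\vee_2,\wedge_2$ is a strong subposet of $F\cup\{x\}$. $sat^*(Q,\{\vee_2,\wedge_2\})$ is the minimum size of such a subset. *)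

theory Defs
  imports Main
begin

definition grid :: "nat \<Rightarrow> nat \<Rightarrow> (nat \<times> nat) set" where
  "grid k l = {1..k} \<times> {1..l}"

definition grid_le :: "nat \<times> nat \<Rightarrow> nat \<times> nat \<Rightarrow> bool" where
  "grid_le p q \<longleftrightarrow> fst p \<le> fst q \<and> snd p \<le> snd q"

definition strong_subposet ::
  "'a set \<Rightarrow> ('a \<Rightarrow> 'a \<Rightarrow> bool) \<Rightarrow> 'b set \<Rightarrow> ('b \<Rightarrow> 'b \<Rightarrow> bool) \<Rightarrow> bool" where
  "strong_subposet P leP R leR \<longleftrightarrow>
     (\<exists>i. inj_on i P \<and> i ` P \<subseteq> R \<and>
          (\<forall>p\<in>P. \<forall>p'\<in>P. leP p p' \<longleftrightarrow> leR (i p) (i p')))"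

text \<open>The three-element posets: element 0 plays a, elements 1, 2 play b1, b2.\<close>
definition three :: "nat set" where "three = {0, 1, 2}"

definition vee2_le :: "nat \<Rightarrow> nat \<Rightarrow> bool" where
  "vee2_le x y \<longleftrightarrow> x = y \<or> x = 0"

definition wedge2_le :: "nat \<Rightarrow> nat \<Rightarrow> bool" where
  "wedge2_le x y \<longleftrightarrow> x = y \<or> y = 0"

definition contains_vee_or_wedge :: "(nat \<times> nat) set \<Rightarrow> bool" where
  "contains_vee_or_wedge F \<longleftrightarrow>
     strong_subposet three vee2_le F grid_le \<or> strong_subposet three wedge2_le F grid_le"

definition strong_sat :: "nat \<Rightarrow> nat \<Rightarrow> (nat \<times> nat) set \<Rightarrow> bool" where
  "strong_sat k l F \<longleftrightarrow> F \<subseteq> grid k l \<and> \<not> contains_vee_or_wedge F \<and>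
     (\<forall>x \<in> grid k l - F. contains_vee_or_wedge (insert x F))"

definition sat_star :: "nat \<Rightarrow> nat \<Rightarrow> nat" where
  "sat_star k l = Min (card ` {F. strong_sat k l F})"

end

theory Submission
  imports Defs "HOL-Library.Product_Order"
begin

text \<open>For the coordinatewise order, F contains a strong \<open>\<or>\<^sub>2\<close> or \<open>\<and>\<^sub>2\<close> exactly when
  comparability is not transitive on F. A saturated F meets every column \<open>{p. snd p = j}\<close>:
  if it misses column \<open>j\<close> but has points with larger second coordinate, take such a point
  \<open>q\<close> with \<open>snd q\<close> minimal and, among those, \<open>fst q\<close> minimal; then \<open>(fst q, j)\<close> is comparable
  to exactly the same points of F as \<open>q\<close>, so adding it keeps comparability transitive,
  contradicting saturation. If F only has points with smaller second coordinate, apply the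
  central reflection of the grid; rows follow by transposition. Hence \<open>|F| \<ge> max k l\<close>.
  Conversely, for \<open>k \<le> l\<close> the \<open>l\<close> points \<open>(min k (l + 1 - t), t)\<close> form a chain with first
  coordinate \<open>k\<close> together with an antichain on the anti-diagonal, and every other point
  \<open>(a, b)\<close> of the grid is comparable to the two points of this set with second coordinate \<open>b\<close>
  and with first coordinate \<open>a\<close>, which are incomparable.\<close>

definition comparable :: "'a::order \<Rightarrow> 'a \<Rightarrow> bool" where
  "comparable x y \<longleftrightarrow> x \<le> y \<or> y \<le> x"

lemma comparable_refl [simp]: "comparable x x"
  by (simp add: comparable_def)

lemma comparable_sym: "comparable x y \<longleftrightarrow> comparable y x"
  by (auto simp: comparable_def)

lemma reflp_comparable: "reflp comparable"
  by (simp add: reflp_def)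

lemma symp_comparable: "symp comparable"
  by (simp add: symp_def comparable_sym)

lemma strong_subposet_three_iff:
  "strong_subposet three P F R \<longleftrightarrow>
     (\<exists>a\<in>F. \<exists>b\<in>F. \<exists>c\<in>F. distinct [a, b, c] \<and>
        (\<forall>p\<in>three. \<forall>p'\<in>three. P p p' \<longleftrightarrow> R ([a, b, c] ! p) ([a, b, c] ! p')))"
proof
  assume "strong_subposet three P F R"
  then obtain i where i: "inj_on i three" "i ` three \<subseteq> F"
    and order: "\<forall>p\<in>three. \<forall>p'\<in>three. P p p' \<longleftrightarrow> R (i p) (i p')"
    unfolding strong_subposet_def by blast
  have "p \<in> three \<Longrightarrow> [i 0, i 1, i 2] ! p = i p" for p
    by (auto simp: three_def)
  with order have "\<forall>p\<in>three. \<forall>p'\<in>three. P p p' \<longleftrightarrow> R ([i 0, i 1, i 2] ! p) ([i 0, i 1, i 2] ! p')"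
    by simp
  moreover have "distinct [i 0, i 1, i 2]"
    using i(1) by (auto simp: three_def inj_on_def)
  moreover have "i 0 \<in> F" "i 1 \<in> F" "i 2 \<in> F"
    using i(2) by (auto simp: three_def)
  ultimately show "\<exists>a\<in>F. \<exists>b\<in>F. \<exists>c\<in>F. distinct [a, b, c] \<and>
      (\<forall>p\<in>three. \<forall>p'\<in>three. P p p' \<longleftrightarrow> R ([a, b, c] ! p) ([a, b, c] ! p'))"
    by blast
next
  assume "\<exists>a\<in>F. \<exists>b\<in>F. \<exists>c\<in>F. distinct [a, b, c] \<and>
      (\<forall>p\<in>three. \<forall>p'\<in>three. P p p' \<longleftrightarrow> R ([a, b, c] ! p) ([a, b, c] ! p'))"
  then obtain a b c where "a \<in> F" "b \<in> F" "c \<in> F" "distinct [a, b, c]"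
    and order: "\<forall>p\<in>three. \<forall>p'\<in>three. P p p' \<longleftrightarrow> R ([a, b, c] ! p) ([a, b, c] ! p')"
    by blast
  then have "inj_on ((!) [a, b, c]) three" "(!) [a, b, c] ` three \<subseteq> F"
    by (auto simp: three_def inj_on_def)
  with order show "strong_subposet three P F R"
    unfolding strong_subposet_def by blast
qed

lemma strong_subposet_vee2_iff:
  "strong_subposet three vee2_le F (\<le>) \<longleftrightarrow>
     (\<exists>a\<in>F. \<exists>b\<in>F. \<exists>c\<in>F. a < b \<and> a < c \<and> \<not> comparable b c)"
  unfolding strong_subposet_three_iff comparable_def less_le_not_le
  by (intro bex_cong refl) (simp add: three_def vee2_le_def, blast)

lemma strong_subposet_wedge2_iff:
  "strong_subposet three wedge2_le F (\<le>) \<longleftrightarrow>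
     (\<exists>a\<in>F. \<exists>b\<in>F. \<exists>c\<in>F. b < a \<and> c < a \<and> \<not> comparable b c)"
  unfolding strong_subposet_three_iff comparable_def less_le_not_le
  by (intro bex_cong refl) (simp add: three_def wedge2_le_def, blast)

lemma strong_vee2_or_wedge2_iff_not_transp_comparable:
  fixes F :: "'a::order set"
  shows "strong_subposet three vee2_le F (\<le>) \<or> strong_subposet three wedge2_le F (\<le>)
     \<longleftrightarrow> \<not> transp_on F comparable"
proof
  assume "strong_subposet three vee2_le F (\<le>) \<or> strong_subposet three wedge2_le F (\<le>)"
  then obtain a b c where "a \<in> F" "b \<in> F" "c \<in> F"
    and "comparable b a" "comparable a c" "\<not> comparable b c"
    unfolding strong_subposet_vee2_iff strong_subposet_wedge2_iff
    by (auto simp: comparable_def dest: less_imp_le)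
  then show "\<not> transp_on F comparable"
    unfolding transp_on_def by blast
next
  assume "\<not> transp_on F comparable"
  then obtain x y z where xyz: "x \<in> F" "y \<in> F" "z \<in> F"
    and "comparable x y" "comparable y z" "\<not> comparable x z"
    unfolding transp_on_def by blast
  then have "y < x \<and> y < z \<or> x < y \<and> z < y"
    unfolding comparable_def by (metis order.trans order.strict_iff_not)
  then show "strong_subposet three vee2_le F (\<le>) \<or> strong_subposet three wedge2_le F (\<le>)"
    unfolding strong_subposet_vee2_iff strong_subposet_wedge2_iff
    using xyz \<open>\<not> comparable x z\<close> by blast
qed

lemma transp_on_image_iff:
  assumes "\<And>p q. p \<in> A \<Longrightarrow> q \<in> A \<Longrightarrow> R (h p) (h q) \<longleftrightarrow> R p q"
  shows "transp_on (h ` A) R \<longleftrightarrow> transp_on A R"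
  unfolding transp_on_image transp_on_def using assms by auto

lemma transp_on_insert_twin:
  assumes "reflp R" "symp R" "transp_on F R" "q \<in> F"
    and twin: "\<And>s. s \<in> F \<Longrightarrow> R x s \<longleftrightarrow> R q s"
  shows "transp_on (insert x F) R"
proof -
  define merge where "merge y = (if y = x then q else y)" for y
  have twin': "R s x \<longleftrightarrow> R s q" if "s \<in> F" for s
    using twin[OF that] \<open>symp R\<close> by (blast dest: sympD)
  have "R (merge y) (merge z) \<longleftrightarrow> R y z" if "y \<in> insert x F" "z \<in> insert x F" for y z
    using that by (cases "y = x"; cases "z = x")
      (simp_all add: merge_def twin twin' reflpD[OF \<open>reflp R\<close>])
  moreover have "merge ` insert x F \<subseteq> F"
    using \<open>q \<in> F\<close> by (auto simp: merge_def)
  ultimately show ?thesis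
    using transp_on_image_iff transp_on_subset \<open>transp_on F R\<close> by metis
qed

lemma grid_le_eq_less_eq: "grid_le = (\<le>)"
  by (auto simp: fun_eq_iff grid_le_def less_eq_prod_def)

lemma strong_sat_iff:
  "strong_sat k l F \<longleftrightarrow> F \<subseteq> grid k l \<and> transp_on F comparable \<and>
     (\<forall>x \<in> grid k l - F. \<not> transp_on (insert x F) comparable)"
  unfolding strong_sat_def contains_vee_or_wedge_def grid_le_eq_less_eq
    strong_vee2_or_wedge2_iff_not_transp_comparable
  by blast

lemma strong_sat_image:
  assumes "bij_betw h (grid k l) (grid k' l')"
    and "\<And>p q. p \<in> grid k l \<Longrightarrow> q \<in> grid k l \<Longrightarrow> comparable (h p) (h q) \<longleftrightarrow> comparable p q"
    and "strong_sat k l F"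
  shows "strong_sat k' l' (h ` F)"
proof -
  have F: "F \<subseteq> grid k l" "transp_on F comparable"
    "\<And>x. x \<in> grid k l - F \<Longrightarrow> \<not> transp_on (insert x F) comparable"
    using \<open>strong_sat k l F\<close> unfolding strong_sat_iff by auto
  have transp_iff: "A \<subseteq> grid k l \<Longrightarrow> transp_on (h ` A) comparable \<longleftrightarrow> transp_on A comparable"
    for A by (rule transp_on_image_iff) (use assms(2) in blast)
  have "\<not> transp_on (insert y (h ` F)) comparable" if "y \<in> grid k' l' - h ` F" for y
  proof -
    have "y \<in> h ` grid k l"
      using that assms(1) by (simp add: bij_betw_def)
    then obtain x where "x \<in> grid k l" "y = h x"
      by blast
    with that have "\<not> transp_on (insert x F) comparable"
      using F(3) by blast
    moreover have "insert x F \<subseteq> grid k l"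
      using F(1) \<open>x \<in> grid k l\<close> by blast
    ultimately show ?thesis
      using transp_iff[of "insert x F"] \<open>y = h x\<close> by simp
  qed
  moreover have "h ` F \<subseteq> grid k' l'"
    using F(1) assms(1) by (auto simp: bij_betw_def)
  ultimately show ?thesis
    unfolding strong_sat_iff using F(1,2) transp_iff by blast
qed

definition grid_reflect :: "nat \<Rightarrow> nat \<Rightarrow> nat \<times> nat \<Rightarrow> nat \<times> nat" where
  "grid_reflect k l p = (k + 1 - fst p, l + 1 - snd p)"

lemma strong_sat_grid_reflect:
  "strong_sat k l F \<Longrightarrow> strong_sat k l (grid_reflect k l ` F)"
  by (erule strong_sat_image[rotated 2], rule bij_betw_byWitness[where f' = "grid_reflect k l"])
    (auto simp: grid_reflect_def grid_def comparable_def less_eq_prod_def)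

lemma strong_sat_swap: "strong_sat k l F \<Longrightarrow> strong_sat l k (prod.swap ` F)"
  by (erule strong_sat_image[rotated 2], rule bij_betw_byWitness[where f' = prod.swap])
    (auto simp: grid_def comparable_def less_eq_prod_def)

lemma strong_sat_nonempty:
  assumes "strong_sat k l F" "1 \<le> k" "1 \<le> l"
  shows "F \<noteq> {}"
proof
  assume "F = {}"
  moreover have "(1, 1) \<in> grid k l"
    using assms(2,3) by (simp add: grid_def)
  ultimately show False
    using assms(1) by (simp add: strong_sat_iff transp_on_def)
qed

lemma strong_sat_column_nonempty_if_above:
  assumes sat: "strong_sat k l F" and "p \<in> F" "j < snd p" "1 \<le> j"
  shows "\<exists>p\<in>F. snd p = j"
proof (rule ccontr)
  assume empty: "\<not> (\<exists>p\<in>F. snd p = j)"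
  have F: "F \<subseteq> grid k l" "transp_on F comparable"
    "\<And>x. x \<in> grid k l - F \<Longrightarrow> \<not> transp_on (insert x F) comparable"
    using sat unfolding strong_sat_iff by auto
  obtain q0 where "q0 \<in> F" "j < snd q0"
    and lowest: "\<And>p. p \<in> F \<Longrightarrow> j < snd p \<Longrightarrow> snd q0 \<le> snd p"
    using ex_has_least_nat[of "\<lambda>p. p \<in> F \<and> j < snd p" p snd] assms(2,3) by auto
  then obtain q where q: "q \<in> F" "j < snd q" "snd q = snd q0"
    and leftmost: "\<And>p. p \<in> F \<Longrightarrow> snd p = snd q0 \<Longrightarrow> fst q \<le> fst p"
    using ex_has_least_nat[of "\<lambda>p. p \<in> F \<and> snd p = snd q0" q0 fst] by auto
  define x where "x = (fst q, j)"
  have "comparable x s \<longleftrightarrow> comparable q s" if "s \<in> F" for s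
  proof -
    have "snd s \<noteq> j"
      using empty that by blast
    then show ?thesis
      using q lowest[OF that] leftmost[OF that]
      by (cases q, cases s) (auto simp: x_def comparable_def less_eq_prod_def)
  qed
  then have "transp_on (insert x F) comparable"
    using transp_on_insert_twin[OF reflp_comparable symp_comparable F(2) q(1)] by blast
  moreover have "x \<in> grid k l - F"
    using q(1,2) F(1) empty \<open>1 \<le> j\<close> by (auto simp: x_def grid_def)
  ultimately show False
    using F(3) by blast
qed

lemma strong_sat_snd_image:
  assumes sat: "strong_sat k l F" and "1 \<le> k" "1 \<le> l"
  shows "snd ` F = {1..l}"
proof
  have F_grid: "F \<subseteq> grid k l"
    using sat by (simp add: strong_sat_def)
  then show "snd ` F \<subseteq> {1..l}"
    by (auto simp: grid_def)
  show "{1..l} \<subseteq> snd ` F"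
  proof
    fix j assume j: "j \<in> {1..l}"
    obtain p where p: "p \<in> F"
      using strong_sat_nonempty assms by blast
    consider "j < snd p" | "snd p = j" | "snd p < j"
      by linarith
    then have "\<exists>p\<in>F. snd p = j"
    proof cases
      case 1
      then show ?thesis
        using strong_sat_column_nonempty_if_above[OF sat p] j by auto
    next
      case 2
      then show ?thesis
        using p by blast
    next
      case 3
      let ?reflect = "grid_reflect k l"
      have "l + 1 - j < snd (?reflect p)" "1 \<le> l + 1 - j"
        using 3 j by (auto simp: grid_reflect_def)
      then obtain p' where "p' \<in> F" "snd (?reflect p') = l + 1 - j"
        using strong_sat_column_nonempty_if_above[OF strong_sat_grid_reflect[OF sat] imageI[OF p]]
        by blast
      moreover have "snd p' \<le> l"
        using F_grid \<open>p' \<in> F\<close> by (auto simp: grid_def)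
      ultimately have "snd p' = j"
        using j by (simp add: grid_reflect_def)
      then show ?thesis
        using \<open>p' \<in> F\<close> by blast
    qed
    then show "j \<in> snd ` F"
      by force
  qed
qed

lemma strong_sat_card_ge:
  assumes sat: "strong_sat k l F" and "1 \<le> k" "1 \<le> l"
  shows "max k l \<le> card F"
proof -
  have "finite F"
    using sat finite_subset unfolding strong_sat_def grid_def by blast
  moreover have "snd ` F = {1..l}"
    using strong_sat_snd_image[OF sat assms(2,3)] .
  moreover have "fst ` F = {1..k}"
    using strong_sat_snd_image[OF strong_sat_swap[OF sat] assms(3,2)] by (simp add: image_image)
  ultimately show ?thesis
    using card_image_le[of F snd] card_image_le[of F fst] by simp
qed

definition bent_diagonal :: "nat \<Rightarrow> nat \<Rightarrow> (nat \<times> nat) set" where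
  "bent_diagonal k l = (\<lambda>t. (min k (l + 1 - t), t)) ` {1..l}"

lemma comparable_bent_diagonal:
  assumes "p \<in> bent_diagonal k l" "q \<in> bent_diagonal k l"
  shows "comparable p q \<longleftrightarrow> p = q \<or> fst p = k \<and> fst q = k"
  using assms by (auto simp: bent_diagonal_def comparable_def less_eq_prod_def)

lemma card_bent_diagonal: "card (bent_diagonal k l) = l"
  unfolding bent_diagonal_def by (subst card_image) (auto simp: inj_on_def)

lemma strong_sat_bent_diagonal:
  assumes "1 \<le> k" "k \<le> l"
  shows "strong_sat k l (bent_diagonal k l)"
proof -
  let ?D = "bent_diagonal k l"
  have "\<not> transp_on (insert x ?D) comparable" if x: "x \<in> grid k l - ?D" for x
  proof -
    obtain a b where ab: "x = (a, b)" "a \<in> {1..k}" "b \<in> {1..l}"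
      using x by (auto simp: grid_def)
    define column_mate where "column_mate = (min k (l + 1 - b), b)"
    define row_mate where "row_mate = (a, l + 1 - a)"
    have mates: "column_mate \<in> ?D" "row_mate \<in> ?D"
      using ab assms by (auto simp: column_mate_def row_mate_def bent_diagonal_def image_iff
          intro!: bexI[of _ b] bexI[of _ "l + 1 - a"])
    have "x \<noteq> column_mate"
      using x mates by auto
    then have "\<not> comparable row_mate column_mate"
      using comparable_bent_diagonal[OF mates(2,1)] ab
      by (auto simp: column_mate_def row_mate_def)
    moreover have "comparable x column_mate" "comparable row_mate x"
      using ab by (auto simp: column_mate_def row_mate_def comparable_def less_eq_prod_def)
    ultimately show ?thesis
      using mates unfolding transp_on_def by blast
  qed
  moreover have "transp_on ?D comparable"
    using comparable_bent_diagonal by (auto simp: transp_on_def)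
  moreover have "?D \<subseteq> grid k l"
    using assms by (auto simp: bent_diagonal_def grid_def)
  ultimately show ?thesis
    unfolding strong_sat_iff by blast
qed

lemma exists_strong_sat_card_max:
  assumes "1 \<le> k" "1 \<le> l"
  shows "\<exists>F. strong_sat k l F \<and> card F = max k l"
proof (cases "k \<le> l")
  case True
  then show ?thesis
    using strong_sat_bent_diagonal[OF assms(1) True] card_bent_diagonal by auto
next
  case False
  then have "strong_sat k l (prod.swap ` bent_diagonal l k)"
    using strong_sat_swap strong_sat_bent_diagonal assms(2) by simp
  moreover have "card (prod.swap ` bent_diagonal l k) = k"
    using card_bent_diagonal by (simp add: card_image)
  ultimately show ?thesis
    using False by auto
qed

theorem theorem1p9:
  fixes k l :: nat
  assumes "k \<ge> 1" and "l \<ge> 1"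
  shows "sat_star k l = max k l"
proof -
  have "{F. strong_sat k l F} \<subseteq> Pow (grid k l)"
    by (auto simp: strong_sat_def)
  then have "finite (card ` {F. strong_sat k l F})"
    by (rule finite_imageI[OF finite_subset]) (simp add: grid_def)
  moreover have "max k l \<in> card ` {F. strong_sat k l F}"
    using exists_strong_sat_card_max assms by force
  moreover have "\<forall>n \<in> card ` {F. strong_sat k l F}. max k l \<le> n"
    using strong_sat_card_ge assms by blast
  ultimately show ?thesis
    unfolding sat_star_def by (intro Min_eqI) auto
qed

end
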